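(* Consider the linear time-invariant descriptor system $$E x_{k+1}=A x_k+B u_k+w_k,\qquad y_{k}=H x_{k}+v_{k-1},$$ with $x_k\in\mathbb{R}^n$, $y_k\in\mathbb{R}^m$, $u_k\in\mathbb{R}^q$, $E,A\in\mathbb{R}^{n_1\times n}$, $B\in\mathbb{R}^{n_1\times q}$, $H\in\mathbb{R}^{m\times n}$. Assume $\begin{bmatrix}E & A\end{bmatrix}$ has full row rank, $\begin{bmatrix}E^T & H^T\end{bmatrix}^T$ has full column rank, and that $P_0,Q,R$ are symmetric positive definite. Let $\bar x_0\in\mathbb{R}^n$, let inputs $u_0,u_1,\dots$ and measurements $y_1,y_2,\dots$ be given, and let $T\ge 2$. Define the unconstrained objective $$J_T(x_1,\dots,x_T)=\|Ex_1-A\bar x_0-Bu_0\|^2_{P_0^{(-)}}+\sum_{k=1}^{T-1}\|Ex_{k+1}-Ax_k-Bu_k\|_Q^2+\sum_{k=1}^{T-1}\|y_k-Hx_k\|_R^2,$$ where $P_0^{(-)}=AP_0A^T+Q$. Define recursively, starting from $\hat x_0^{(+)}=\bar x_0$, $P_0^{(+)}=P_0$, for $k=1,\dots,T-1$: $$P_k^{(+)}=\big(E^T(P_{k-1}^{(-)})^{-1}E+H^TR^{-1}H\big)^{-1},\qquad P_k^{(-)}=AP_k^{(+)}A^T+Q,$$ $$\hat x_k^{(+)}=P_k^{(+)}H^TR^{-1}y_k+P_k^{(+)}E^T(P_{k-1}^{(-)})^{-1}\big(A\hat x_{k-1}^{(+)}+Bu_{k-1}\big).$$ Then for every $x_T\in\mathbb{R}^n$,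 $$\min_{x_1,\dots,x_{T-1}} J_T(x_1,\dots,x_T)=\|Ex_T-z_T\|^2_{P_{T-1}^{(-)}}+\widehat J_{T-1},$$ where $z_T:=A\hat x_{T-1}^{(+)}+Bu_{T-1}$ and $\widehat J_{T-1}$ is a constant independent of $x_T$, namely the minimum over $x_1,\dots,x_{T-1}$ of $\|Ex_1-A\bar x_0-Bu_0\|^2_{P_0^{(-)}}+\sum_{k=1}^{T-2}\|Ex_{k+1}-Ax_k-Bu_k\|_Q^2+\sum_{k=1}^{T-1}\|y_k-Hx_k\|_R^2$.
   Context: For a symmetric positive definite matrix $S$ and a vector $z$, the notation $\|z\|_S^2$ means $z^TS^{-1}z$. All matrices $P_k^{(+)}$, $P_k^{(-)}$ defined by the recursion are symmetric positive definite under the stated assumptions, so all inverses exist. The left-hand side is the arrival cost of the unconstrained full information estimation problem (no inequality constraints on states or noises). *)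

theory Defs
  imports "HOL-Analysis.Analysis"
begin

definition sym_pd :: "real^'k^'k \<Rightarrow> bool" where
  "sym_pd P \<longleftrightarrow> transpose P = P \<and> (\<forall>x. x \<noteq> 0 \<longrightarrow> x \<bullet> (P *v x) > 0)"

definition wnorm :: "real^'k^'k \<Rightarrow> real^'k \<Rightarrow> real" where
  "wnorm S z = z \<bullet> (matrix_inv S *v z)"

definition hblock :: "real^'a^'r \<Rightarrow> real^'b^'r \<Rightarrow> real^('a + 'b)^'r" where
  "hblock M N = (\<chi> i. \<chi> j. case j of Inl a \<Rightarrow> M $ i $ a | Inr b \<Rightarrow> N $ i $ b)"

definition vblock :: "real^'c^'a \<Rightarrow> real^'c^'b \<Rightarrow> real^'c^('a + 'b)" where
  "vblock M N = (\<chi> i. case i of Inl a \<Rightarrow> M $ a | Inr b \<Rightarrow> N $ b)"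

fun Pplus :: "real^'n^'n1 \<Rightarrow> real^'n^'n1 \<Rightarrow> real^'n^'m \<Rightarrow> real^'n1^'n1 \<Rightarrow> real^'m^'m
               \<Rightarrow> real^'n^'n \<Rightarrow> nat \<Rightarrow> real^'n^'n" where
  "Pplus E A H Q R P0 0 = P0"
| "Pplus E A H Q R P0 (Suc k) =
     matrix_inv (transpose E ** matrix_inv (A ** Pplus E A H Q R P0 k ** transpose A + Q) ** E
                 + transpose H ** matrix_inv R ** H)"

definition Pminus :: "real^'n^'n1 \<Rightarrow> real^'n^'n1 \<Rightarrow> real^'n^'m \<Rightarrow> real^'n1^'n1 \<Rightarrow> real^'m^'m
               \<Rightarrow> real^'n^'n \<Rightarrow> nat \<Rightarrow> real^'n1^'n1" where
  "Pminus E A H Q R P0 k = A ** Pplus E A H Q R P0 k ** transpose A + Q"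

fun xplus :: "real^'n^'n1 \<Rightarrow> real^'n^'n1 \<Rightarrow> real^'q^'n1 \<Rightarrow> real^'n^'m \<Rightarrow> real^'n1^'n1 \<Rightarrow> real^'m^'m
               \<Rightarrow> real^'n^'n \<Rightarrow> real^'n \<Rightarrow> (nat \<Rightarrow> real^'q) \<Rightarrow> (nat \<Rightarrow> real^'m) \<Rightarrow> nat \<Rightarrow> real^'n" where
  "xplus E A B H Q R P0 xbar u y 0 = xbar"
| "xplus E A B H Q R P0 xbar u y (Suc k) =
     Pplus E A H Q R P0 (Suc k) *v (transpose H *v (matrix_inv R *v y (Suc k)))
     + Pplus E A H Q R P0 (Suc k) *v (transpose E *v (matrix_inv (Pminus E A H Q R P0 k) *v
          (A *v xplus E A B H Q R P0 xbar u y k + B *v u k)))"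

definition JT :: "real^'n^'n1 \<Rightarrow> real^'n^'n1 \<Rightarrow> real^'q^'n1 \<Rightarrow> real^'n^'m \<Rightarrow> real^'n1^'n1 \<Rightarrow> real^'m^'m
               \<Rightarrow> real^'n^'n \<Rightarrow> real^'n \<Rightarrow> (nat \<Rightarrow> real^'q) \<Rightarrow> (nat \<Rightarrow> real^'m) \<Rightarrow> nat
               \<Rightarrow> (nat \<Rightarrow> real^'n) \<Rightarrow> real" where
  "JT E A B H Q R P0 xbar u y T x =
     wnorm (A ** P0 ** transpose A + Q) (E *v x 1 - A *v xbar - B *v u 0)
     + (\<Sum>k=1..T-1. wnorm Q (E *v x (k+1) - A *v x k - B *v u k))
     + (\<Sum>k=1..T-1. wnorm R (y k - H *v x k))"

text \<open>reduced objective defining the constant \<open>\<widehat>J_{T-1}\<close>; only x 1, ..., x (T-1) are used\<close>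
definition Jred :: "real^'n^'n1 \<Rightarrow> real^'n^'n1 \<Rightarrow> real^'q^'n1 \<Rightarrow> real^'n^'m \<Rightarrow> real^'n1^'n1 \<Rightarrow> real^'m^'m
               \<Rightarrow> real^'n^'n \<Rightarrow> real^'n \<Rightarrow> (nat \<Rightarrow> real^'q) \<Rightarrow> (nat \<Rightarrow> real^'m) \<Rightarrow> nat
               \<Rightarrow> (nat \<Rightarrow> real^'n) \<Rightarrow> real" where
  "Jred E A B H Q R P0 xbar u y T x =
     wnorm (A ** P0 ** transpose A + Q) (E *v x 1 - A *v xbar - B *v u 0)
     + (\<Sum>k=1..T-2. wnorm Q (E *v x (k+1) - A *v x k - B *v u k))
     + (\<Sum>k=1..T-1. wnorm R (y k - H *v x k))"

definition is_min :: "real set \<Rightarrow> real \<Rightarrow> bool" where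
  "is_min S v \<longleftrightarrow> v \<in> S \<and> (\<forall>s\<in>S. v \<le> s)"

end

theory Submission
  imports Defs
begin

text \<open>
  Forward dynamic programming. Write |z|_S for z^T S^-1 z. By induction on k, the least cost of
  the first k measurements over all trajectories with x_k = v is |v - xhat_k^(+)|_(P_k^(+)) + c_k
  for a constant c_k. The step from k to k + 1 is two completions of the square: minimising
  |x - xhat|_P + |c - A x|_Q over x leaves |c - A xhat|_(A P A^T + Q) (time update), and
  |E x - z|_S + |y - H x|_R equals |x - xhat'|_(M^-1) plus a constant, where
  M = E^T S^-1 E + H^T R^-1 H (measurement update). M is positive definite because [E; H] has
  full column rank.
\<close>

declare transpose_matrix_vector [simp del]

lemma inner_matrix_vector_transpose: "((M::real^'a^'b) *v x) \<bullet> y = x \<bullet> (transpose M *v y)"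
  by (metis dot_lmul_matrix inner_commute transpose_matrix_vector)

lemma transpose_add: "transpose (X + Y) = transpose X + (transpose Y :: 'x::semiring_1^'a^'b)"
  by (simp add: transpose_def vec_eq_iff)

lemma quadratic_form_congruence:
  fixes E :: "real^'a^'b" and W :: "real^'b^'b"
  shows "x \<bullet> ((transpose E ** W ** E) *v x) = (E *v x) \<bullet> (W *v (E *v x))"
  by (metis inner_matrix_vector_transpose matrix_vector_mul_assoc)

subsection \<open>Inverse matrices\<close>

lemma matrix_inv_inverse:
  fixes A :: "real^'a^'a"
  assumes "invertible A"
  shows matrix_inv_right: "A ** matrix_inv A = mat 1"
    and matrix_inv_left: "matrix_inv A ** A = mat 1"
proof -
  have "\<exists>A'. A ** A' = mat 1 \<and> A' ** A = mat 1" using assms invertible_def by blast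
  then have "A ** matrix_inv A = mat 1 \<and> matrix_inv A ** A = mat 1"
    unfolding matrix_inv_def by (rule someI_ex)
  then show "A ** matrix_inv A = mat 1" "matrix_inv A ** A = mat 1" by auto
qed

lemma matrix_inv_cancel:
  fixes A :: "real^'a^'a"
  assumes "invertible A"
  shows matrix_inv_mult_cancel: "matrix_inv A *v (A *v w) = w"
    and mult_matrix_inv_cancel: "A *v (matrix_inv A *v w) = w"
  by (simp_all add: matrix_vector_mul_assoc matrix_inv_left matrix_inv_right assms)

lemma matrix_inv_matrix_inv:
  fixes A :: "real^'a^'a"
  assumes "invertible A"
  shows "matrix_inv (matrix_inv A) = A"
proof -
  have inv: "invertible (matrix_inv A)"
    using matrix_inv_inverse[OF assms] invertible_def by blast
  have "matrix_inv (matrix_inv A) = matrix_inv (matrix_inv A) ** (matrix_inv A ** A)"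
    by (simp add: matrix_inv_left assms)
  also have "\<dots> = A"
    by (simp only: matrix_mul_assoc matrix_inv_left[OF inv] matrix_mul_lid)
  finally show ?thesis .
qed

subsection \<open>Symmetric positive definite matrices\<close>

lemma sym_pd_pos: "sym_pd P \<Longrightarrow> x \<noteq> 0 \<Longrightarrow> x \<bullet> (P *v x) > 0"
  unfolding sym_pd_def by blast

lemma sym_pd_nonneg: "sym_pd P \<Longrightarrow> x \<bullet> (P *v x) \<ge> 0"
  unfolding sym_pd_def by (cases "x = 0") (auto intro: less_imp_le)

lemma sym_pd_invertible:
  fixes S :: "real^'a^'a"
  assumes "sym_pd S"
  shows "invertible S"
proof -
  have "inj ((*v) S)"
  proof (rule injI)
    fix a b assume "S *v a = S *v b"
    then have "(a - b) \<bullet> (S *v (a - b)) = 0" by (simp add: matrix_vector_mult_diff_distrib)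
    then show "a = b" using sym_pd_pos[OF assms, of "a - b"] by auto
  qed
  then show ?thesis using invertible_left_inverse matrix_left_invertible_injective by blast
qed

lemma sym_pd_matrix_inv:
  fixes S :: "real^'a^'a"
  assumes "sym_pd S"
  shows "sym_pd (matrix_inv S)"
proof -
  have inv: "invertible S" using sym_pd_invertible assms .
  have "transpose (matrix_inv S) ** S = mat 1"
    using assms by (metis inv matrix_inv_right matrix_transpose_mul sym_pd_def transpose_mat)
  then have "transpose (matrix_inv S) = matrix_inv S"
    by (metis inv matrix_inv_right matrix_mul_assoc matrix_mul_lid matrix_mul_rid)
  moreover have "x \<bullet> (matrix_inv S *v x) > 0" if "x \<noteq> 0" for x
  proof -
    let ?w = "matrix_inv S *v x"
    have x: "x = S *v ?w" by (simp add: mult_matrix_inv_cancel inv)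
    then have "?w \<noteq> 0" using that by auto
    then show ?thesis using sym_pd_pos[OF assms] x by (metis inner_commute)
  qed
  ultimately show ?thesis unfolding sym_pd_def by blast
qed

lemma sym_pd_transpose: "sym_pd P \<Longrightarrow> transpose P = P"
  unfolding sym_pd_def by blast

lemma sym_pd_congruence_add:
  fixes A :: "real^'a^'b" and P :: "real^'a^'a"
  assumes "sym_pd P" "sym_pd Q"
  shows "sym_pd (A ** P ** transpose A + Q)"
proof -
  have "transpose (A ** P ** transpose A + Q) = A ** P ** transpose A + Q"
    using assms by (simp add: matrix_transpose_mul sym_pd_transpose transpose_add matrix_mul_assoc)
  moreover have "x \<bullet> ((A ** P ** transpose A + Q) *v x) > 0" if "x \<noteq> 0" for x
  proof -
    have "x \<bullet> ((A ** P ** transpose A + Q) *v x)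
        = (transpose A *v x) \<bullet> (P *v (transpose A *v x)) + x \<bullet> (Q *v x)"
      using quadratic_form_congruence[of x "transpose A" P]
      by (simp add: matrix_vector_mult_add_rdistrib inner_add_right)
    then show ?thesis
      using sym_pd_nonneg[OF assms(1)] sym_pd_pos[OF assms(2) that] by (metis add_nonneg_pos)
  qed
  ultimately show ?thesis unfolding sym_pd_def by blast
qed

lemma sym_pd_information_matrix:
  fixes E :: "real^'a^'b" and H :: "real^'a^'c"
  assumes "sym_pd S" "sym_pd R" and kernel: "\<And>x. E *v x = 0 \<Longrightarrow> H *v x = 0 \<Longrightarrow> x = 0"
  shows "sym_pd (transpose E ** matrix_inv S ** E + transpose H ** matrix_inv R ** H)"
proof -
  have S: "sym_pd (matrix_inv S)" and R: "sym_pd (matrix_inv R)"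
    using sym_pd_matrix_inv assms(1,2) by auto
  have "transpose (transpose E ** matrix_inv S ** E + transpose H ** matrix_inv R ** H)
      = transpose E ** matrix_inv S ** E + transpose H ** matrix_inv R ** H"
    using sym_pd_transpose[OF S] sym_pd_transpose[OF R]
    by (simp add: matrix_transpose_mul transpose_add matrix_mul_assoc)
  moreover have "x \<bullet> ((transpose E ** matrix_inv S ** E + transpose H ** matrix_inv R ** H) *v x) > 0"
    if "x \<noteq> 0" for x
  proof -
    have "x \<bullet> ((transpose E ** matrix_inv S ** E + transpose H ** matrix_inv R ** H) *v x)
       = (E *v x) \<bullet> (matrix_inv S *v (E *v x)) + (H *v x) \<bullet> (matrix_inv R *v (H *v x))"
      by (simp only: matrix_vector_mult_add_rdistrib inner_add_right quadratic_form_congruence)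
    moreover have "E *v x \<noteq> 0 \<or> H *v x \<noteq> 0" using kernel that by blast
    ultimately show ?thesis
      using sym_pd_nonneg[OF S, of "E *v x"] sym_pd_nonneg[OF R, of "H *v x"]
        sym_pd_pos[OF S, of "E *v x"] sym_pd_pos[OF R, of "H *v x"] by (metis add_nonneg_pos add_pos_nonneg)
  qed
  ultimately show ?thesis unfolding sym_pd_def by blast
qed

lemma vblock_full_rank_kernel:
  fixes E :: "real^'a^'b" and H :: "real^'a^'c"
  assumes "rank (vblock E H) = CARD('a)" "E *v x = 0" "H *v x = 0"
  shows "x = 0"
proof -
  have "(vblock E H *v x) $ i = 0" for i
    using assms(2,3)
    by (cases i) (simp_all add: vblock_def matrix_vector_mult_def vec_eq_iff)
  then have "vblock E H *v x = vblock E H *v 0" by (simp add: vec_eq_iff)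
  then show ?thesis using full_rank_injective assms(1) by (metis injD)
qed

subsection \<open>Weighted norms and completion of squares\<close>

lemma wnorm_nonneg: "sym_pd S \<Longrightarrow> wnorm S z \<ge> 0"
  unfolding wnorm_def by (rule sym_pd_nonneg[OF sym_pd_matrix_inv])

lemma wnorm_zero [simp]: "wnorm S 0 = 0"
  by (simp add: wnorm_def)

lemma wnorm_matrix_inv: "invertible M \<Longrightarrow> wnorm (matrix_inv M) e = e \<bullet> (M *v e)"
  unfolding wnorm_def by (simp add: matrix_inv_matrix_inv)

lemma wnorm_add:
  assumes "sym_pd S"
  shows "wnorm S (a + b) = wnorm S a + 2 * (b \<bullet> (matrix_inv S *v a)) + wnorm S b"
  using inner_matrix_vector_transpose[of "matrix_inv S" a b]
    sym_pd_transpose[OF sym_pd_matrix_inv[OF assms]]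
  by (simp add: wnorm_def matrix_vector_right_distrib inner_add_left inner_add_right inner_commute)

lemma wnorm_diff:
  assumes "sym_pd S"
  shows "wnorm S (a - b) = wnorm S a - 2 * (b \<bullet> (matrix_inv S *v a)) + wnorm S b"
  using inner_matrix_vector_transpose[of "matrix_inv S" a b]
    sym_pd_transpose[OF sym_pd_matrix_inv[OF assms]]
  by (simp add: wnorm_def matrix_vector_mult_diff_distrib inner_diff_left inner_diff_right inner_commute)

lemma measurement_update_completion:
  fixes E :: "real^'n^'n1" and H :: "real^'n^'m" and S :: "real^'n1^'n1" and R :: "real^'m^'m"
    and z :: "real^'n1" and yv :: "real^'m"
  assumes pS: "sym_pd S" and pR: "sym_pd R" and kernel: "\<And>x. E *v x = 0 \<Longrightarrow> H *v x = 0 \<Longrightarrow> x = 0"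
  defines "M \<equiv> transpose E ** matrix_inv S ** E + transpose H ** matrix_inv R ** H"
  defines "xh \<equiv> matrix_inv M *v (transpose H *v (matrix_inv R *v yv))
                 + matrix_inv M *v (transpose E *v (matrix_inv S *v z))"
  shows "wnorm S (E *v x - z) + wnorm R (yv - H *v x)
       = wnorm (matrix_inv M) (x - xh) + (wnorm S (E *v xh - z) + wnorm R (yv - H *v xh))"
proof -
  have inv: "invertible M"
    unfolding M_def by (rule sym_pd_invertible[OF sym_pd_information_matrix[OF pS pR kernel]])
  define e where "e = x - xh"
  define a where "a = E *v xh - z"
  define c where "c = yv - H *v xh"
  have "M *v xh = transpose E *v (matrix_inv S *v z) + transpose H *v (matrix_inv R *v yv)"
    unfolding xh_def by (simp add: matrix_vector_right_distrib mult_matrix_inv_cancel inv)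
  moreover have "M *v xh = transpose E *v (matrix_inv S *v (E *v xh))
                         + transpose H *v (matrix_inv R *v (H *v xh))"
    unfolding M_def by (simp add: matrix_vector_mult_add_rdistrib matrix_vector_mul_assoc matrix_mul_assoc)
  ultimately have normal_eq: "transpose E *v (matrix_inv S *v a) = transpose H *v (matrix_inv R *v c)"
    unfolding a_def c_def by (simp add: matrix_vector_mult_diff_distrib algebra_simps)
  have "E *v x - z = a + E *v e" "yv - H *v x = c - H *v e"
    unfolding a_def c_def e_def by (simp_all add: matrix_vector_mult_diff_distrib)
  then have "wnorm S (E *v x - z) + wnorm R (yv - H *v x)
      = wnorm S a + wnorm R c + (wnorm S (E *v e) + wnorm R (H *v e))
        + 2 * (e \<bullet> (transpose E *v (matrix_inv S *v a)) - e \<bullet> (transpose H *v (matrix_inv R *v c)))"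
    by (simp add: wnorm_add[OF pS] wnorm_diff[OF pR] inner_matrix_vector_transpose)
  also have "wnorm S (E *v e) + wnorm R (H *v e) = e \<bullet> (M *v e)"
    unfolding M_def wnorm_def
    by (simp only: matrix_vector_mult_add_rdistrib inner_add_right quadratic_form_congruence)
  finally show ?thesis unfolding normal_eq by (simp add: a_def c_def e_def wnorm_matrix_inv[OF inv])
qed

lemma time_update_completion:
  fixes A :: "real^'n^'n1" and P :: "real^'n^'n" and Q :: "real^'n1^'n1"
    and cv :: "real^'n1" and xh :: "real^'n"
  assumes pP: "sym_pd P" and pQ: "sym_pd Q"
  defines "S \<equiv> A ** P ** transpose A + Q"
  defines "xs \<equiv> xh + P *v (transpose A *v (matrix_inv S *v (cv - A *v xh)))"
  shows "wnorm P (x - xh) + wnorm Q (cv - A *v x)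
       = wnorm S (cv - A *v xh) + wnorm P (x - xs) + wnorm Q (A *v (x - xs))"
proof -
  have invS: "invertible S" unfolding S_def by (rule sym_pd_invertible[OF sym_pd_congruence_add[OF pP pQ]])
  have invP: "invertible P" and invQ: "invertible Q" using sym_pd_invertible pP pQ by auto
  define r where "r = cv - A *v xh"
  define g where "g = matrix_inv S *v r"
  define d where "d = P *v (transpose A *v g)"
  define e where "e = x - xs"
  have "r = S *v g" unfolding g_def by (simp add: mult_matrix_inv_cancel invS)
  then have r: "r = A *v d + Q *v g"
    unfolding S_def d_def by (simp add: matrix_vector_mult_add_rdistrib matrix_vector_mul_assoc matrix_mul_assoc)
  have xs: "xs = xh + d" unfolding xs_def d_def g_def r_def ..
  have "cv - A *v x = r - A *v d - A *v e"
    unfolding r_def e_def xs by (simp add: matrix_vector_mult_diff_distrib matrix_vector_right_distrib)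
  also have "\<dots> = Q *v g - A *v e" using r by simp
  finally have Q_term: "wnorm Q (cv - A *v x)
      = (Q *v g) \<bullet> g - 2 * (e \<bullet> (transpose A *v g)) + wnorm Q (A *v e)"
    by (simp add: wnorm_diff[OF pQ] matrix_inv_mult_cancel[OF invQ] wnorm_def[of Q "Q *v g"]
        inner_matrix_vector_transpose)
  have P_term: "wnorm P (x - xh) = d \<bullet> (transpose A *v g) + 2 * (e \<bullet> (transpose A *v g)) + wnorm P e"
  proof -
    have Pd: "matrix_inv P *v d = transpose A *v g" unfolding d_def by (rule matrix_inv_mult_cancel[OF invP])
    have "x - xh = d + e" unfolding e_def xs by simp
    then show ?thesis by (simp add: wnorm_add[OF pP] wnorm_def[of P d] Pd)
  qed
  have "wnorm S (cv - A *v xh) = r \<bullet> g" unfolding wnorm_def r_def g_def ..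
  also have "\<dots> = (A *v d) \<bullet> g + (Q *v g) \<bullet> g" unfolding r inner_add_left ..
  finally show ?thesis
    using Q_term P_term unfolding e_def[symmetric] by (simp add: inner_matrix_vector_transpose)
qed

subsection \<open>Arrival cost recursion\<close>

lemma is_min_iff: "is_min {f x | x. P x} m \<longleftrightarrow> (\<exists>x. P x \<and> f x = m) \<and> (\<forall>x. P x \<longrightarrow> m \<le> f x)"
  unfolding is_min_def by auto

lemma is_min_shift:
  assumes "is_min {f x | x. P x} m" and "\<And>x. P x \<Longrightarrow> g x = f x + a"
  shows "is_min {g x | x. P x} (m + a)"
  using assms unfolding is_min_iff by auto

locale descriptor_filter =
  fixes E A :: "real^'n^'n1" and B :: "real^'q^'n1" and H :: "real^'n^'m"
    and Q :: "real^'n1^'n1" and R :: "real^'m^'m" and P0 :: "real^'n^'n"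
    and xbar :: "real^'n" and u :: "nat \<Rightarrow> real^'q" and y :: "nat \<Rightarrow> real^'m"
  assumes pdP0: "sym_pd P0" and pdQ: "sym_pd Q" and pdR: "sym_pd R"
    and kernel: "\<And>x. E *v x = 0 \<Longrightarrow> H *v x = 0 \<Longrightarrow> x = 0"
begin

abbreviation "Pp \<equiv> Pplus E A H Q R P0"
abbreviation "Pm \<equiv> Pminus E A H Q R P0"
abbreviation "xp \<equiv> xplus E A B H Q R P0 xbar u y"

definition filter_cost :: "nat \<Rightarrow> (nat \<Rightarrow> real^'n) \<Rightarrow> real" where
  "filter_cost k x = wnorm (A ** P0 ** transpose A + Q) (E *v x 1 - A *v xbar - B *v u 0)
     + (\<Sum>j=1..<k. wnorm Q (E *v x (j+1) - A *v x j - B *v u j))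
     + (\<Sum>j=1..k. wnorm R (y j - H *v x j))"

definition predicted_cost :: "nat \<Rightarrow> (nat \<Rightarrow> real^'n) \<Rightarrow> real" where
  "predicted_cost k x = filter_cost k x + wnorm Q (E *v x (Suc k) - A *v x k - B *v u k)"

definition arrival_cost :: "nat \<Rightarrow> real \<Rightarrow> bool" where
  "arrival_cost k c \<longleftrightarrow> (\<forall>v. is_min {filter_cost k x | x. x k = v} (wnorm (Pp k) (v - xp k) + c))"

lemma sym_pd_Pplus: "sym_pd (Pp k)"
proof (induction k)
  case 0 then show ?case using pdP0 by simp
next
  case (Suc k)
  then show ?case
    using sym_pd_matrix_inv[OF sym_pd_information_matrix[OF sym_pd_congruence_add pdR kernel]] pdQ
    by simp
qed

lemma sym_pd_Pminus: "sym_pd (Pm k)"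
  unfolding Pminus_def by (rule sym_pd_congruence_add[OF sym_pd_Pplus pdQ])

lemma measurement_update:
  "wnorm (Pm k) (E *v v - (A *v xp k + B *v u k)) + wnorm R (y (Suc k) - H *v v)
   = wnorm (Pp (Suc k)) (v - xp (Suc k))
     + (wnorm (Pm k) (E *v xp (Suc k) - (A *v xp k + B *v u k)) + wnorm R (y (Suc k) - H *v xp (Suc k)))"
  using measurement_update_completion[OF sym_pd_Pminus[of k] pdR kernel,
      where yv = "y (Suc k)" and z = "A *v xp k + B *v u k" and x = v]
  by (simp add: Pminus_def)

lemma filter_cost_Suc:
  "k \<ge> 1 \<Longrightarrow> filter_cost (Suc k) x = predicted_cost k x + wnorm R (y (Suc k) - H *v x (Suc k))"
  unfolding filter_cost_def predicted_cost_def by simp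

lemma filter_cost_upd: "k \<ge> 1 \<Longrightarrow> filter_cost k (x(Suc k := v)) = filter_cost k x"
  unfolding filter_cost_def by (auto intro!: sum.cong)

lemma arrival_cost_one:
  "arrival_cost 1 (wnorm (Pm 0) (E *v xp 1 - (A *v xp 0 + B *v u 0)) + wnorm R (y 1 - H *v xp 1))"
proof -
  have "filter_cost 1 x = wnorm (Pm 0) (E *v x 1 - (A *v xp 0 + B *v u 0)) + wnorm R (y 1 - H *v x 1)" for x
    unfolding filter_cost_def by (simp add: Pminus_def diff_diff_eq)
  then have "filter_cost 1 x = wnorm (Pp 1) (x 1 - xp 1)
      + (wnorm (Pm 0) (E *v xp 1 - (A *v xp 0 + B *v u 0)) + wnorm R (y 1 - H *v xp 1))" for x
    using measurement_update[of 0 "x 1"] by simp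
  then show ?thesis unfolding arrival_cost_def is_min_iff by auto
qed

lemma arrival_cost_lower_bound:
  "arrival_cost k c \<Longrightarrow> wnorm (Pp k) (x k - xp k) + c \<le> filter_cost k x"
  unfolding arrival_cost_def is_min_iff by blast

lemma arrival_cost_attained:
  "arrival_cost k c \<Longrightarrow> \<exists>x. x k = v \<and> filter_cost k x = wnorm (Pp k) (v - xp k) + c"
  unfolding arrival_cost_def is_min_iff by blast

lemma predicted_cost_min:
  assumes k: "k \<ge> 1" and arrival: "arrival_cost k c"
  shows "is_min {predicted_cost k x | x. x (Suc k) = v} (wnorm (Pm k) (E *v v - (A *v xp k + B *v u k)) + c)"
proof -
  define xs where "xs = xp k + Pp k *v (transpose A *v (matrix_inv (Pm k) *v (E *v v - B *v u k - A *v xp k)))"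
  have completion: "wnorm (Pp k) (w - xp k) + wnorm Q ((E *v v - B *v u k) - A *v w)
      = wnorm (Pm k) (E *v v - (A *v xp k + B *v u k)) + wnorm (Pp k) (w - xs) + wnorm Q (A *v (w - xs))" for w
    using time_update_completion[OF sym_pd_Pplus pdQ, where A = A and xh = "xp k" and cv = "E *v v - B *v u k" and x = w]
    unfolding xs_def Pminus_def by (simp add: algebra_simps)
  have cost: "predicted_cost k x = filter_cost k x + wnorm Q ((E *v v - B *v u k) - A *v x k)"
    if "x (Suc k) = v" for x
    unfolding predicted_cost_def that by (simp add: algebra_simps)
  have "wnorm (Pm k) (E *v v - (A *v xp k + B *v u k)) + c \<le> predicted_cost k x"
    if "x (Suc k) = v" for x
    using arrival_cost_lower_bound[OF arrival, of x] completion[of "x k"] cost[of x, OF that]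
      wnorm_nonneg[OF sym_pd_Pplus, of k "x k - xs"] wnorm_nonneg[OF pdQ, of "A *v (x k - xs)"]
    by linarith
  moreover obtain x where x: "x k = xs" "filter_cost k x = wnorm (Pp k) (xs - xp k) + c"
    using arrival_cost_attained[OF arrival] by blast
  have "predicted_cost k (x(Suc k := v)) = filter_cost k x + wnorm Q ((E *v v - B *v u k) - A *v xs)"
    using cost[of "x(Suc k := v)"] filter_cost_upd[OF k] x(1) by simp
  then have "predicted_cost k (x(Suc k := v)) = wnorm (Pm k) (E *v v - (A *v xp k + B *v u k)) + c"
    using completion[of xs] x(2) by simp
  ultimately show ?thesis unfolding is_min_iff by (metis fun_upd_same)
qed

lemma arrival_cost_Suc:
  assumes k: "k \<ge> 1" and arrival: "arrival_cost k c"
  shows "arrival_cost (Suc k)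
    (c + (wnorm (Pm k) (E *v xp (Suc k) - (A *v xp k + B *v u k)) + wnorm R (y (Suc k) - H *v xp (Suc k))))"
  unfolding arrival_cost_def
proof
  fix v
  have "is_min {filter_cost (Suc k) x | x. x (Suc k) = v}
      (wnorm (Pm k) (E *v v - (A *v xp k + B *v u k)) + c + wnorm R (y (Suc k) - H *v v))"
    by (rule is_min_shift[OF predicted_cost_min[OF k arrival]]) (simp add: filter_cost_Suc[OF k])
  then show "is_min {filter_cost (Suc k) x | x. x (Suc k) = v} (wnorm (Pp (Suc k)) (v - xp (Suc k)) +
     (c + (wnorm (Pm k) (E *v xp (Suc k) - (A *v xp k + B *v u k)) + wnorm R (y (Suc k) - H *v xp (Suc k)))))"
    using measurement_update[of k v] by (simp add: algebra_simps)
qed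

lemma ex_arrival_cost: "k \<ge> 1 \<Longrightarrow> \<exists>c. arrival_cost k c"
proof (induction k rule: nat_induct_at_least)
  case base then show ?case using arrival_cost_one by blast
next
  case (Suc k) then show ?case using arrival_cost_Suc by blast
qed

lemma arrival_cost_is_min:
  assumes "arrival_cost k c"
  shows "is_min {filter_cost k x | x. True} c"
proof -
  have "c \<le> filter_cost k x" for x
    using arrival_cost_lower_bound[OF assms, of x] wnorm_nonneg[OF sym_pd_Pplus, of k "x k - xp k"]
    by linarith
  moreover have "\<exists>x. filter_cost k x = c"
    using arrival_cost_attained[OF assms, of "xp k"] by auto
  ultimately show ?thesis unfolding is_min_iff by auto
qed

end

theorem theorem1:
  fixes E A :: "real^'n^'n1" and B :: "real^'q^'n1" and H :: "real^'n^'m"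
    and Q :: "real^'n1^'n1" and R :: "real^'m^'m" and P0 :: "real^'n^'n"
    and xbar :: "real^'n" and u :: "nat \<Rightarrow> real^'q" and y :: "nat \<Rightarrow> real^'m"
    and T :: nat
  assumes "rank (hblock E A) = CARD('n1)"
    and "rank (vblock E H) = CARD('n)"
    and "sym_pd P0" and "sym_pd Q" and "sym_pd R"
    and "T \<ge> 2"
  shows "\<exists>Jhat. is_min {Jred E A B H Q R P0 xbar u y T x | x. True} Jhat \<and>
           (\<forall>xT. is_min {JT E A B H Q R P0 xbar u y T x | x. x T = xT}
              (wnorm (Pminus E A H Q R P0 (T-1))
                 (E *v xT - (A *v xplus E A B H Q R P0 xbar u y (T-1) + B *v u (T-1))) + Jhat))"
proof -
  interpret descriptor_filter E A B H Q R P0 xbar u y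
    using assms(2-5) vblock_full_rank_kernel by unfold_locales blast+
  obtain n where T: "T = Suc (Suc n)" using assms(6) by (metis add_2_eq_Suc le_Suc_ex)
  obtain c where arrival: "arrival_cost (Suc n) c" using ex_arrival_cost[of "Suc n"] by auto
  have "Jred E A B H Q R P0 xbar u y T x = filter_cost (Suc n) x" for x
    unfolding Jred_def filter_cost_def T by (simp add: atLeastLessThanSuc_atLeastAtMost)
  moreover have "JT E A B H Q R P0 xbar u y T x = predicted_cost (Suc n) x" for x
    unfolding JT_def predicted_cost_def filter_cost_def T
    by (simp add: atLeastLessThanSuc_atLeastAtMost)
  ultimately show ?thesis
    using arrival_cost_is_min[OF arrival] predicted_cost_min[OF _ arrival] unfolding T by auto
qed

end
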